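(* For parameters $b>0$, $\sigma>0$, $r\ge0$, $q\ge0$ with $r\neq q$, loan principal $K\ge b$, maturity $T>t\ge0$ and house price $S\ge b$, write $\tau=T-t$, $\theta=\frac{2(r-q)}{\sigma^2}$, $z_1=\frac{\ln(S/K)+(r-q+\frac12\sigma^2)\tau}{\sigma\sqrt\tau}$, $z_2=\frac{\ln(b^2/(KS))+(r-q+\frac12\sigma^2)\tau}{\sigma\sqrt\tau}$, $z_3=\frac{\ln(S/b)+(r-q+\frac12\sigma^2)\tau}{\sigma\sqrt\tau}$, $z_4=\frac{\ln(b/S)+(r-q+\frac12\sigma^2)\tau}{\sigma\sqrt\tau}$, and define $$\begin{aligned}P(t,S)={}&Ke^{-r\tau}\Phi(-z_1+\sigma\sqrt\tau)-Se^{-q\tau}\Phi(-z_1)-be^{-r\tau}\Phi(-z_3+\sigma\sqrt\tau)+Se^{-q\tau}\Phi(-z_3)\\&+\frac1\theta\Bigl(be^{-r\tau}\Phi(-z_3+\sigma\sqrt\tau)-Se^{-q\tau}\bigl(\tfrac bS\bigr)^{1+\theta}\bigl(\Phi(z_4)-\Phi(z_2)\bigr)-Ke^{-r\tau}\bigl(\tfrac Kb\bigr)^{\theta-1}\Phi(z_2-\theta\sigma\sqrt\tau)\Bigr),\end{aligned}$$ where $\Phi$ is the standard normal distribution function. Suppose $r=0$ and $0<q<\frac12\sigma^2$. Then for every fixed $t\ge0$ and $S\ge b$ there exists $T'>t$ such that for all $T>T'$, $P(t,S)<Ke^{-r(T-t)}-Se^{-q(T-t)}$ (i.e. $P(t,S)<K-Se^{-q(T-t)}$),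 violating the lower bound $P(t,S)\ge Ke^{-r(T-t)}-Se^{-q(T-t)}$.
   Context: $P$ is the published pricing formula for a no-negative-equity guarantee (a European put on a house price modelled as a reflected geometric Brownian motion with lower reflecting boundary $b$, volatility $\sigma$, risk-free rate $r$ and deferment rate $q$ playing the role of a dividend yield). Under any equivalent risk-neutral measure the price must satisfy $P(t,S)\ge Ke^{-r(T-t)}-Se^{-q(T-t)}$. *)

theory Defs
  imports "HOL-Probability.Probability"
begin

definition Phi :: "real \<Rightarrow> real" where
  "Phi = cdf (density lborel std_normal_density)"

definition nneg_price ::
  "real \<Rightarrow> real \<Rightarrow> real \<Rightarrow> real \<Rightarrow> real \<Rightarrow> real \<Rightarrow> real \<Rightarrow> real \<Rightarrow> real" where
  "nneg_price b \<sigma> r q K T t S =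
    (let \<tau> = T - t;
         \<theta> = 2 * (r - q) / \<sigma>\<^sup>2;
         s = \<sigma> * sqrt \<tau>;
         m = (r - q + \<sigma>\<^sup>2 / 2) * \<tau>;
         z1 = (ln (S / K) + m) / s;
         z2 = (ln (b\<^sup>2 / (K * S)) + m) / s;
         z3 = (ln (S / b) + m) / s;
         z4 = (ln (b / S) + m) / s
     in K * exp (- r * \<tau>) * Phi (- z1 + s) - S * exp (- q * \<tau>) * Phi (- z1)
        - b * exp (- r * \<tau>) * Phi (- z3 + s) + S * exp (- q * \<tau>) * Phi (- z3)
        + (1 / \<theta>) * (b * exp (- r * \<tau>) * Phi (- z3 + s)
            - S * exp (- q * \<tau>) * (b / S) powr (1 + \<theta>) * (Phi z4 - Phi z2)
            - K * exp (- r * \<tau>) * (K / b) powr (\<theta> - 1) * Phi (z2 - \<theta> * s)))"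

end

theory Submission
  imports Defs
begin

(* For r = 0 every discount factor equals 1, the terms carrying exp(-q tau) vanish as
   tau = T - t tends to infinity, and every remaining argument of Phi has the form
   (a + c tau) / (sigma sqrt tau) + d sigma sqrt tau with c + d sigma^2 > 0 (this is where
   q < sigma^2/2 enters), so it tends to infinity and Phi of it to 1. Hence P(t,S) tends to
   K - b + (b - K (K/b)^(theta-1)) / theta, which is at most K - b because theta < 0 and K >= b,
   while the lower bound K - S exp(-q tau) tends to K. *)

lemma Phi_nonneg: "0 \<le> Phi x"
  unfolding Phi_def
  using finite_borel_measure.cdf_nonneg[OF real_distribution.finite_borel_measure_M]
    real_dist_normal_dist by blast

lemma Phi_le_1: "Phi x \<le> 1"
  unfolding Phi_def using real_distribution.cdf_bounded_prob[OF real_dist_normal_dist] by blast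

lemma Phi_tendsto_1:
  assumes "filterlim f at_top F"
  shows "((\<lambda>x. Phi (f x)) \<longlongrightarrow> 1) F"
  using filterlim_compose[OF real_distribution.cdf_lim_at_top_prob[OF real_dist_normal_dist] assms]
  unfolding Phi_def .

lemma filterlim_drift_at_top:
  fixes a c d \<sigma> :: real
  assumes "\<sigma> > 0" and "c + d * \<sigma>\<^sup>2 > 0"
  shows "filterlim (\<lambda>\<tau>. (a + c * \<tau>) / (\<sigma> * sqrt \<tau>) + d * (\<sigma> * sqrt \<tau>)) at_top at_top"
proof -
  have "\<forall>\<^sub>F \<tau> in at_top. (a / \<sigma>) * (1 / sqrt \<tau>) + ((c + d * \<sigma>\<^sup>2) / \<sigma>) * sqrt \<tau>
      = (a + c * \<tau>) / (\<sigma> * sqrt \<tau>) + d * (\<sigma> * sqrt \<tau>)"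
    using eventually_gt_at_top[of 0]
  proof eventually_elim
    case (elim \<tau>)
    then have "sqrt \<tau> * sqrt \<tau> = \<tau>" by simp
    then show ?case using elim assms by (simp add: field_simps power2_eq_square)
  qed
  moreover have "filterlim (\<lambda>\<tau>. (a / \<sigma>) * (1 / sqrt \<tau>) + ((c + d * \<sigma>\<^sup>2) / \<sigma>) * sqrt \<tau>) at_top at_top"
  proof (rule filterlim_tendsto_add_at_top)
    show "((\<lambda>\<tau>. (a / \<sigma>) * (1 / sqrt \<tau>)) \<longlongrightarrow> 0) at_top" by real_asymp
    show "filterlim (\<lambda>\<tau>. ((c + d * \<sigma>\<^sup>2) / \<sigma>) * sqrt \<tau>) at_top at_top"
      using assms by (intro filterlim_tendsto_pos_mult_at_top[OF tendsto_const] sqrt_at_top) auto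
  qed
  ultimately show ?thesis using filterlim_cong by fastforce
qed

lemma tendsto_zero_mult_Phi:
  assumes "(f \<longlongrightarrow> 0) F"
  shows "((\<lambda>x. f x * Phi (g x)) \<longlongrightarrow> 0) F"
proof (rule Lim_null_comparison)
  show "\<forall>\<^sub>F x in F. norm (f x * Phi (g x)) \<le> \<bar>f x\<bar>"
    using Phi_nonneg Phi_le_1 by (intro always_eventually) (simp add: abs_mult mult_left_le)
  show "((\<lambda>x. \<bar>f x\<bar>) \<longlongrightarrow> 0) F"
    using tendsto_rabs_zero[OF assms] .
qed

lemma nneg_price_tendsto_at_top:
  fixes b \<sigma> q K t S :: real
  assumes "\<sigma> > 0" and "0 < q" and "q < \<sigma>\<^sup>2 / 2"
  defines "\<theta> \<equiv> 2 * (0 - q) / \<sigma>\<^sup>2"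
  shows "((\<lambda>T. nneg_price b \<sigma> 0 q K T t S)
           \<longlongrightarrow> K - b + (1 / \<theta>) * (b - K * (K / b) powr (\<theta> - 1))) at_top"
proof -
  let ?m = "0 - q + \<sigma>\<^sup>2 / 2" and ?s = "\<lambda>T. \<sigma> * sqrt (T - t)"
  have drift: "filterlim (\<lambda>T. (a + c * (T - t)) / ?s T + d * ?s T) at_top at_top"
    if "c + d * \<sigma>\<^sup>2 > 0" for a c d
  proof (rule filterlim_compose[OF filterlim_drift_at_top[OF assms(1) that]])
    show "filterlim (\<lambda>T. T - t) at_top at_top" by real_asymp
  qed
  have Phi_z: "((\<lambda>T. Phi ((a + ?m * (T - t)) / ?s T)) \<longlongrightarrow> 1) at_top" for a
    using Phi_tendsto_1[OF drift[of ?m 0 a]] assms by simp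
  have Phi_z_minus_\<theta>s: "((\<lambda>T. Phi ((a + ?m * (T - t)) / ?s T - \<theta> * ?s T)) \<longlongrightarrow> 1) at_top" for a
  proof -
    have "?m + (- \<theta>) * \<sigma>\<^sup>2 > 0" using assms unfolding \<theta>_def by simp
    from Phi_tendsto_1[OF drift[OF this, of a]] show ?thesis by simp
  qed
  have Phi_s_minus_z: "((\<lambda>T. Phi (- ((a + ?m * (T - t)) / ?s T) + ?s T)) \<longlongrightarrow> 1) at_top" for a
  proof -
    have "- ?m + 1 * \<sigma>\<^sup>2 > 0" using assms by simp
    moreover have "- ((a + ?m * (T - t)) / ?s T) + ?s T
        = (- a + (- ?m) * (T - t)) / ?s T + 1 * ?s T" for T
      by (simp add: minus_divide_left algebra_simps)
    ultimately show ?thesis using Phi_tendsto_1[OF drift] by presburger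
  qed
  have decay: "((\<lambda>T. S * exp (- q * (T - t))) \<longlongrightarrow> 0) at_top"
    using assms(2) by real_asymp
  show ?thesis
    unfolding nneg_price_def Let_def \<theta>_def[symmetric] mult_zero_left minus_zero exp_zero mult_1_right
    by (rule Phi_z Phi_z_minus_\<theta>s Phi_s_minus_z decay tendsto_zero_mult_Phi[OF decay]
        | rule tendsto_eq_intros refl)+ simp
qed

lemma reflection_term_nonpos:
  fixes b K \<theta> :: real
  assumes "\<theta> < 0" and "0 < b" and "b \<le> K"
  shows "(1 / \<theta>) * (b - K * (K / b) powr (\<theta> - 1)) \<le> 0"
proof -
  have Kb: "1 \<le> K / b" using assms by simp
  have "(K / b) powr \<theta> = (K / b) * (K / b) powr (\<theta> - 1)"
    using powr_add[of "K / b" 1 "\<theta> - 1"] assms(2,3) by simp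
  then have "K * (K / b) powr (\<theta> - 1) = b * (K / b) powr \<theta>"
    using assms(2) by simp
  also have "\<dots> \<le> b"
    using powr_mono[of \<theta> 0 "K / b"] Kb assms(1,2) by simp
  finally have "0 \<le> b - K * (K / b) powr (\<theta> - 1)" by simp
  with assms(1) show ?thesis by (simp add: divide_nonneg_neg)
qed

theorem proposition3p5:
  fixes b \<sigma> r q K t S :: real
  assumes "b > 0" and "\<sigma> > 0" and "r = 0" and "0 < q" and "q < \<sigma>\<^sup>2 / 2"
    and "K \<ge> b" and "t \<ge> 0" and "S \<ge> b"
  shows "\<exists>T'>t. \<forall>T>T'. nneg_price b \<sigma> r q K T t S
            < K * exp (- r * (T - t)) - S * exp (- q * (T - t))"
proof -
  define \<theta> where "\<theta> = 2 * (0 - q) / \<sigma>\<^sup>2"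
  define L where "L = K - b + (1 / \<theta>) * (b - K * (K / b) powr (\<theta> - 1))"
  have "\<theta> < 0" using assms unfolding \<theta>_def by (simp add: divide_neg_pos)
  then have "L < K" using reflection_term_nonpos[of \<theta> b K] assms unfolding L_def by simp
  have price: "((\<lambda>T. nneg_price b \<sigma> r q K T t S) \<longlongrightarrow> L) at_top"
    using nneg_price_tendsto_at_top[OF assms(2,4,5)] assms(3) unfolding L_def \<theta>_def by simp
  have bound: "((\<lambda>T. K * exp (- r * (T - t)) - S * exp (- q * (T - t))) \<longlongrightarrow> K) at_top"
    using assms(3,4) by simp real_asymp
  have "\<forall>\<^sub>F T in at_top. nneg_price b \<sigma> r q K T t S
                    - (K * exp (- r * (T - t)) - S * exp (- q * (T - t))) < 0"
    by (rule order_tendstoD(2)[OF tendsto_diff[OF price bound]]) (use \<open>L < K\<close> in simp)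
  then have "\<forall>\<^sub>F T in at_top. nneg_price b \<sigma> r q K T t S
                    < K * exp (- r * (T - t)) - S * exp (- q * (T - t))"
    by (rule eventually_mono) simp
  then obtain N where "\<forall>T>N. nneg_price b \<sigma> r q K T t S
                        < K * exp (- r * (T - t)) - S * exp (- q * (T - t))"
    by (auto simp: eventually_at_top_dense)
  then show ?thesis by (intro exI[of _ "max N t + 1"]) auto
qed

end
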